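(* Let $(\mathbf{L},\mathbf{R})\in\mathcal{P}_{\mathsf N}$ be balanced and suppose the associated inequality $\sum_{n=1}^{m_L}\mathsf S(X_n)\ge\sum_{n=1}^{m_R}\mathsf S(Y_n)$ is a holographic entropy inequality. Then $(\mathbf{L},\mathbf{R})$ obeys region dominance: for every nonempty $X\subseteq[\mathsf N+1]$, the number of columns of $\mathbf{L}$ having a $1$ in every row indexed by $X$ is at most the number of columns of $\mathbf{R}$ having a $1$ in every row indexed by $X$, i.e. $\big|\bigwedge_{i\in X}\mathbf{L}_{(i)}\big|\le\big|\bigwedge_{i\in X}\mathbf{R}_{(i)}\big|$.
   Context: $\mathcal{P}_{\mathsf N}$ denotes the set of pairs $(\mathbf{L},\mathbf{R})$ of $(0,1)$-matrices, $\mathbf{L}$ of size $(\mathsf N+1)\times m_L$ and $\mathbf{R}$ of size $(\mathsf N+1)\times m_R$, such that some index $p\in[\mathsf N+1]$ (the purifier) has row $p$ of $\mathbf{L}$ and row $p$ of $\mathbf{R}$ both zero. $\mathbf{A}_{(i)}$ is the $i$-th row; $|v|=\sum_k|v_k|$; $\wedge$ is bitwise AND. The pair is balanced if $|\mathbf{L}_{(i)}|=|\mathbf{R}_{(i)}|$ for all $i\in[\mathsf N+1]$. Let $X_n\subseteq[\mathsf N+1]$ be the set of rows in which column $n$ of $\mathbf{L}$ has a $1$, and $Y_n$ likewise for $\mathbf{R}$. Min-cut function: let $G$ be a finite undirected graph with vertex set $\mathscr V$, nonnegative edge weights $w$, and $\mathsf N+1$ distinguished distinct (external) vertices labeled $1,\dots,\mathsf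 N+1$. For $X\subseteq[\mathsf N+1]$, $\mathsf S_G(X)=\min\{\sum_{e\in\mathscr C(V)}w(e): V\subseteq\mathscr V,\ V\cap\{\text{external vertices}\}=\text{the vertices labeled by }X\}$, where $\mathscr C(V)$ is the set of edges with exactly one endpoint in $V$. The inequality is a holographic entropy inequality (HEI) if $\sum_n\mathsf S_G(X_n)\ge\sum_n\mathsf S_G(Y_n)$ holds for every such weighted graph $G$. *)

theory Defs
  imports Complex_Main "HOL-Library.Uprod"
begin

text \<open>Vertices are natural numbers (every finite
graph is isomorphic to one on natural-number vertices).\<close>

definition wgraph :: "nat \<Rightarrow> nat set \<Rightarrow> nat uprod set \<Rightarrow> (nat uprod \<Rightarrow> real) \<Rightarrow> (nat \<Rightarrow> nat) \<Rightarrow> bool" where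
  "wgraph N VV E w ext \<longleftrightarrow> finite VV \<and> finite E \<and> (\<forall>e\<in>E. set_uprod e \<subseteq> VV)
     \<and> (\<forall>e\<in>E. 0 \<le> w e) \<and> inj_on ext {1..N+1} \<and> ext ` {1..N+1} \<subseteq> VV"

definition cut_edges :: "nat uprod set \<Rightarrow> nat set \<Rightarrow> nat uprod set" where
  "cut_edges E V = {e \<in> E. \<exists>a b. e = Upair a b \<and> a \<in> V \<and> b \<notin> V}"

definition cut_cost :: "nat uprod set \<Rightarrow> (nat uprod \<Rightarrow> real) \<Rightarrow> nat set \<Rightarrow> real" where
  "cut_cost E w V = (\<Sum>e\<in>cut_edges E V. w e)"

definition minS :: "nat \<Rightarrow> nat set \<Rightarrow> nat uprod set \<Rightarrow> (nat uprod \<Rightarrow> real) \<Rightarrow> (nat \<Rightarrow> nat) \<Rightarrow> nat set \<Rightarrow> real" where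
  "minS N VV E w ext X = Min {cut_cost E w V | V. V \<subseteq> VV \<and> V \<inter> ext ` {1..N+1} = ext ` X}"

text \<open>(0,1)-matrices are represented as boolean functions: M i k is the entry in row i
(i in 1..N+1) and column k (k in 1..m).\<close>

definition colset :: "nat \<Rightarrow> (nat \<Rightarrow> nat \<Rightarrow> bool) \<Rightarrow> nat \<Rightarrow> nat set" where
  "colset N M k = {i \<in> {1..N+1}. M i k}"

definition row_weight :: "(nat \<Rightarrow> nat \<Rightarrow> bool) \<Rightarrow> nat \<Rightarrow> nat \<Rightarrow> nat" where
  "row_weight M m i = card {k \<in> {1..m}. M i k}"

definition in_P :: "nat \<Rightarrow> nat \<Rightarrow> nat \<Rightarrow> (nat \<Rightarrow> nat \<Rightarrow> bool) \<Rightarrow> (nat \<Rightarrow> nat \<Rightarrow> bool) \<Rightarrow> bool" where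
  "in_P N mL mR L R \<longleftrightarrow> (\<exists>p\<in>{1..N+1}. (\<forall>k\<in>{1..mL}. \<not> L p k) \<and> (\<forall>k\<in>{1..mR}. \<not> R p k))"

definition balanced :: "nat \<Rightarrow> nat \<Rightarrow> nat \<Rightarrow> (nat \<Rightarrow> nat \<Rightarrow> bool) \<Rightarrow> (nat \<Rightarrow> nat \<Rightarrow> bool) \<Rightarrow> bool" where
  "balanced N mL mR L R \<longleftrightarrow> (\<forall>i\<in>{1..N+1}. row_weight L mL i = row_weight R mR i)"

definition is_HEI :: "nat \<Rightarrow> nat \<Rightarrow> nat \<Rightarrow> (nat \<Rightarrow> nat \<Rightarrow> bool) \<Rightarrow> (nat \<Rightarrow> nat \<Rightarrow> bool) \<Rightarrow> bool" where
  "is_HEI N mL mR L R \<longleftrightarrow> (\<forall>VV E w ext. wgraph N VV E w ext \<longrightarrow>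
      (\<Sum>n=1..mL. minS N VV E w ext (colset N L n)) \<ge> (\<Sum>n=1..mR. minS N VV E w ext (colset N R n)))"

definition and_weight :: "(nat \<Rightarrow> nat \<Rightarrow> bool) \<Rightarrow> nat \<Rightarrow> nat set \<Rightarrow> nat" where
  "and_weight M m X = card {k \<in> {1..m}. \<forall>i\<in>X. M i k}"

end

theory Submission
  imports Defs
begin

text \<open>Given a nonempty region X not containing the purifier p, test the inequality on the star
graph whose centre is an internal vertex joined to every i \<in> X by an edge of weight 1 and to p by
an edge of weight |X| - 1. For Y not containing p, the cheaper of the two candidate cuts gives
S(Y) = |Y \<inter> X| - [X \<subseteq> Y]. Summed over the columns of a matrix whose row p vanishes, this is
the total row weight over X minus the number of columns containing X. Balance cancels the row
weights, so the entropy inequality on this graph is exactly region dominance for X. If p \<in> X,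
no column of L contains X and there is nothing to prove.\<close>

lemma admissible_sets_one_internal_vertex:
  fixes N :: nat
  assumes "Y \<subseteq> {1..N+1}"
  shows "{V. V \<subseteq> {0..N+1} \<and> V \<inter> id ` {1..N+1} = id ` Y} = {Y, insert 0 Y}"
proof (intro equalityI subsetI)
  fix V assume "V \<in> {V. V \<subseteq> {0..N+1} \<and> V \<inter> id ` {1..N+1} = id ` Y}"
  then have "V - {0} = Y"
    by auto
  then show "V \<in> {Y, insert 0 Y}"
    by (cases "0 \<in> V") auto
next
  fix V assume "V \<in> {Y, insert 0 Y}"
  then show "V \<in> {V. V \<subseteq> {0..N+1} \<and> V \<inter> id ` {1..N+1} = id ` Y}"
    using assms by auto
qed

lemma minS_one_internal_vertex:
  assumes "Y \<subseteq> {1..N+1}"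
  shows "minS N {0..N+1} E w id Y = min (cut_cost E w Y) (cut_cost E w (insert 0 Y))"
  unfolding minS_def setcompr_eq_image admissible_sets_one_internal_vertex[OF assms] by simp

lemma sum_card_colset_inter:
  assumes "X \<subseteq> {1..N+1}" "finite X"
  shows "(\<Sum>n=1..m. real (card (colset N M n \<inter> X))) = (\<Sum>i\<in>X. real (row_weight M m i))"
proof -
  have "colset N M n \<inter> X = X \<inter> {i. M i n}" for n
    using assms(1) unfolding colset_def by auto
  then have "(\<Sum>n=1..m. real (card (colset N M n \<inter> X))) = (\<Sum>n=1..m. \<Sum>i\<in>X. of_bool (M i n))"
    using assms(2) by simp
  also have "\<dots> = (\<Sum>i\<in>X. \<Sum>n=1..m. of_bool (M i n))"
    by (rule sum.swap)
  also have "\<dots> = (\<Sum>i\<in>X. real (row_weight M m i))"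
    by (simp add: row_weight_def Int_def)
  finally show ?thesis .
qed

lemma sum_of_bool_subset_colset:
  assumes "X \<subseteq> {1..N+1}"
  shows "(\<Sum>n=1..m. of_bool (X \<subseteq> colset N M n)) = real (and_weight M m X)"
proof -
  have "X \<subseteq> colset N M n \<longleftrightarrow> (\<forall>i\<in>X. M i n)" for n
    using assms unfolding colset_def by auto
  then show ?thesis by (simp add: and_weight_def Int_def)
qed

locale star_graph =
  fixes N p :: nat and X :: "nat set"
  assumes purifier: "p \<in> {1..N+1}" and X: "X \<subseteq> {1..N+1}" "X \<noteq> {}" "p \<notin> X"
begin

definition edges :: "nat uprod set" where
  "edges = Upair 0 ` insert p X"

definition weight :: "nat uprod \<Rightarrow> real" where
  "weight e = (if e = Upair 0 p then real (card X) - 1 else 1)"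

lemma finite_X: "finite X"
  using X(1) finite_subset by blast

lemma card_X_pos: "card X \<ge> 1"
  using finite_X X(2) by (simp add: Suc_le_eq card_gt_0_iff)

lemma wgraph_star: "wgraph N {0..N+1} edges weight id"
  using purifier X finite_X card_X_pos unfolding wgraph_def edges_def weight_def by auto

lemma weight_leaf: "i \<in> X \<Longrightarrow> weight (Upair 0 i) = 1"
  using X(3) by (auto simp: weight_def)

lemma weight_purifier: "weight (Upair 0 p) = real (card X) - 1"
  by (simp add: weight_def)

lemma cut_cost_star:
  "cut_cost edges weight V = (\<Sum>i\<in>{i \<in> insert p X. (0 \<in> V) \<noteq> (i \<in> V)}. weight (Upair 0 i))"
proof -
  have "cut_edges edges V = Upair 0 ` {i \<in> insert p X. (0 \<in> V) \<noteq> (i \<in> V)}"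
    unfolding edges_def cut_edges_def by auto blast+
  moreover have "inj_on (Upair 0) A" for A :: "nat set"
    by (auto intro!: inj_onI)
  ultimately show ?thesis
    unfolding cut_cost_def by (simp add: sum.reindex)
qed

lemma minS_star:
  assumes Y: "Y \<subseteq> {1..N+1}" "p \<notin> Y"
  shows "minS N {0..N+1} edges weight id Y = real (card (Y \<inter> X)) - of_bool (X \<subseteq> Y)"
proof -
  have "{i \<in> insert p X. (0 \<in> Y) \<noteq> (i \<in> Y)} = Y \<inter> X"
    using Y by auto
  then have cut_Y: "cut_cost edges weight Y = card (Y \<inter> X)"
    by (simp add: cut_cost_star weight_leaf)
  have "{i \<in> insert p X. (0 \<in> insert 0 Y) \<noteq> (i \<in> insert 0 Y)} = insert p (X - Y)"
    using Y purifier X by auto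
  then have cut_0Y: "cut_cost edges weight (insert 0 Y) = real (card X) - 1 + card (X - Y)"
    using X(3) finite_X by (simp add: cut_cost_star weight_leaf weight_purifier)
  have card_split: "card (Y \<inter> X) + card (X - Y) = card X"
    using finite_X by (metis Int_commute card_Int_Diff)
  show ?thesis
  proof (cases "X \<subseteq> Y")
    case True
    then have "card (X - Y) = 0" "Y \<inter> X = X"
      by (metis Diff_eq_empty_iff card.empty, blast)
    then show ?thesis
      unfolding minS_one_internal_vertex[OF Y(1)] cut_Y cut_0Y using True by simp
  next
    case False
    then have "card (X - Y) \<ge> 1"
      using finite_X by (simp add: Suc_le_eq card_gt_0_iff)
    then show ?thesis
      unfolding minS_one_internal_vertex[OF Y(1)] cut_Y cut_0Y using False card_split by simp
  qed
qed

lemma sum_minS_star_colset: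
  assumes "\<forall>k\<in>{1..m}. \<not> M p k"
  shows "(\<Sum>n=1..m. minS N {0..N+1} edges weight id (colset N M n))
       = (\<Sum>i\<in>X. real (row_weight M m i)) - real (and_weight M m X)"
proof -
  have "(\<Sum>n=1..m. minS N {0..N+1} edges weight id (colset N M n))
      = (\<Sum>n=1..m. real (card (colset N M n \<inter> X)) - of_bool (X \<subseteq> colset N M n))"
  proof (rule sum.cong)
    fix n assume "n \<in> {1..m}"
    then have "p \<notin> colset N M n"
      using assms by (simp add: colset_def)
    moreover have "colset N M n \<subseteq> {1..N+1}"
      by (auto simp: colset_def)
    ultimately show "minS N {0..N+1} edges weight id (colset N M n)
        = real (card (colset N M n \<inter> X)) - of_bool (X \<subseteq> colset N M n)"
      by (rule minS_star[rotated])
  qed simp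
  also have "\<dots> = (\<Sum>i\<in>X. real (row_weight M m i)) - real (and_weight M m X)"
    unfolding sum_subtractf sum_card_colset_inter[OF X(1) finite_X]
      sum_of_bool_subset_colset[OF X(1)] ..
  finally show ?thesis .
qed

lemma and_weight_le_if_HEI:
  assumes pL: "\<forall>k\<in>{1..mL}. \<not> L p k" and pR: "\<forall>k\<in>{1..mR}. \<not> R p k"
    and "balanced N mL mR L R" and "is_HEI N mL mR L R"
  shows "and_weight L mL X \<le> and_weight R mR X"
proof -
  have "(\<Sum>i\<in>X. real (row_weight L mL i)) = (\<Sum>i\<in>X. real (row_weight R mR i))"
    using assms(3) X(1) unfolding balanced_def by (intro sum.cong) auto
  moreover have "(\<Sum>n=1..mR. minS N {0..N+1} edges weight id (colset N R n))
      \<le> (\<Sum>n=1..mL. minS N {0..N+1} edges weight id (colset N L n))"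
    using assms(4) wgraph_star unfolding is_HEI_def by blast
  ultimately show ?thesis
    using sum_minS_star_colset[of mL L, OF pL] sum_minS_star_colset[of mR R, OF pR] by simp
qed

end

theorem theorem5:
  fixes N mL mR :: nat and L R :: "nat \<Rightarrow> nat \<Rightarrow> bool"
  assumes "in_P N mL mR L R"
    and "balanced N mL mR L R"
    and "is_HEI N mL mR L R"
  shows "\<forall>X. X \<subseteq> {1..N+1} \<and> X \<noteq> {} \<longrightarrow> and_weight L mL X \<le> and_weight R mR X"
proof (intro allI impI)
  fix X assume X: "X \<subseteq> {1..N+1} \<and> X \<noteq> {}"
  obtain p where p: "p \<in> {1..N+1}" "\<forall>k\<in>{1..mL}. \<not> L p k" "\<forall>k\<in>{1..mR}. \<not> R p k"
    using assms(1) unfolding in_P_def by blast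
  show "and_weight L mL X \<le> and_weight R mR X"
  proof (cases "p \<in> X")
    case True
    then have "and_weight L mL X = 0"
      using p(2) unfolding and_weight_def by auto
    then show ?thesis by simp
  next
    case False
    then interpret star_graph N p X
      using p(1) X by unfold_locales auto
    show ?thesis
      using and_weight_le_if_HEI p(2,3) assms(2,3) by blast
  qed
qed

end
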